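(* Let $\mathcal F=\{f_\lambda\}_{\lambda\in\Lambda}\subseteq l^\infty(\mathbb N)$ for an index set $\Lambda$, let $\mathcal A_0$ be the unital C*-algebra generated by $\mathcal F$, and let $\mathcal A_{\mathcal F}$ be the smallest $\sigma_A$-invariant C*-subalgebra of $l^\infty(\mathbb N)$ containing $\mathcal A_0$, with maximal ideal space $X_{\mathcal F}$. Then: (i) For $n\in\mathbb N$ put $z_n=(f_\lambda(n))_{\lambda\in\Lambda}\in\prod_{\lambda}\overline{f_\lambda(\mathbb N)}$ and let $X_0$ be the closure of $\{z_n:n\in\mathbb N\}$ in this product. Then $\mathcal A_0\cong C(X_0)$, via $g\mapsto (n\mapsto g(z_n))$. (ii) Put $\kappa_n=(z_n,z_{n+1},\ldots)\in X_0^{\mathbb N}$ and let $Y_{\mathcal F}$ be the closure of $\{\kappa_n:n\in\mathbb N\}$ in $X_0^{\mathbb N}$. Then $\mathcal A_{\mathcal F}\cong C(Y_{\mathcal F})$, via $h\mapsto(n\mapsto h(\kappa_n))$. (iii) Let $B$ be the shift $(\omega_0,\omega_1,\ldots)\mapsto(\omega_1,\omega_2,\ldots)$ on $X_0^{\mathbb N}$ and $B_{\mathcal F}=B|_{Y_{\mathcal F}}$. Then there is a homeomorphism $X_{\mathcal F}\to Y_{\mathcal F}$ sending $\iota(n)$ to $\kappa_n$ for all $n$ and conjugating the map $A$ on $X_{\mathcal F}$ to $B_{\mathcal F}$. In particular $\mathrm{AE}(\mathcal F)=h(B_{\mathcal F})$.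
   Context: $\mathbb N=\{0,1,2,\ldots\}$, $l^\infty(\mathbb N)$ the bounded complex functions on $\mathbb N$, $(\sigma_Af)(n)=f(n+1)$; $\overline{f(\mathbb N)}$ is the closure of $f(\mathbb N)$ in $\mathbb C$; products carry the product topology. For an anqie (unital $\sigma_A$-invariant C*-subalgebra) $\mathcal A$ with maximal ideal space $X$, $\iota(n)\in X$ is evaluation at $n$ and $A:X\to X$, $(A\rho)(f)=\rho(\sigma_Af)$, is the continuous map with $A\iota(n)=\iota(n+1)$; $\mathrm{AE}(\mathcal F)=h(A)$ for $\mathcal A=\mathcal A_{\mathcal F}$, where $h$ is topological entropy. *)

theory Defs
  imports "HOL-Analysis.Analysis"
begin

text \<open>Elements of l-infinity(N) are bounded functions nat => complex, with pointwise
operations, complex conjugation as involution and the sup norm.\<close>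

definition bounded_seq :: "(nat \<Rightarrow> complex) \<Rightarrow> bool" where
  "bounded_seq f \<longleftrightarrow> bounded (range f)"

definition unital_cstar_subalg :: "(nat \<Rightarrow> complex) set \<Rightarrow> bool" where
  "unital_cstar_subalg S \<longleftrightarrow>
     (\<forall>f\<in>S. bounded_seq f) \<and>
     (\<lambda>_. 1) \<in> S \<and>
     (\<forall>f\<in>S. \<forall>g\<in>S. (\<lambda>n. f n + g n) \<in> S) \<and>
     (\<forall>f\<in>S. \<forall>g\<in>S. (\<lambda>n. f n * g n) \<in> S) \<and>
     (\<forall>c. \<forall>f\<in>S. (\<lambda>n. c * f n) \<in> S) \<and>
     (\<forall>f\<in>S. (\<lambda>n. cnj (f n)) \<in> S) \<and>
     (\<forall>gs g. (\<forall>k. gs k \<in> S) \<and> uniform_limit UNIV gs g sequentially \<longrightarrow> g \<in> S)"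

definition shiftA :: "(nat \<Rightarrow> complex) \<Rightarrow> (nat \<Rightarrow> complex)" where
  "shiftA f = (\<lambda>n. f (Suc n))"

definition shift_invariant :: "(nat \<Rightarrow> complex) set \<Rightarrow> bool" where
  "shift_invariant S \<longleftrightarrow> (\<forall>f\<in>S. shiftA f \<in> S)"

definition cstar_gen :: "(nat \<Rightarrow> complex) set \<Rightarrow> (nat \<Rightarrow> complex) set" where
  "cstar_gen F = \<Inter> {S. unital_cstar_subalg S \<and> F \<subseteq> S}"

definition anqie_gen :: "(nat \<Rightarrow> complex) set \<Rightarrow> (nat \<Rightarrow> complex) set" where
  "anqie_gen F = \<Inter> {S. unital_cstar_subalg S \<and> shift_invariant S \<and> F \<subseteq> S}"

definition characters :: "(nat \<Rightarrow> complex) set \<Rightarrow> ((nat \<Rightarrow> complex) \<Rightarrow> complex) set" where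
  "characters \<A> = {\<rho> \<in> extensional \<A>.
       (\<forall>f\<in>\<A>. \<forall>g\<in>\<A>. \<rho> (\<lambda>n. f n + g n) = \<rho> f + \<rho> g) \<and>
       (\<forall>f\<in>\<A>. \<forall>g\<in>\<A>. \<rho> (\<lambda>n. f n * g n) = \<rho> f * \<rho> g) \<and>
       (\<forall>c. \<forall>f\<in>\<A>. \<rho> (\<lambda>n. c * f n) = c * \<rho> f) \<and>
       \<rho> (\<lambda>_. 1) = 1}"

text \<open>Weak-* (Gelfand) topology: topology of pointwise convergence on \<A>.\<close>
definition max_ideal_space :: "(nat \<Rightarrow> complex) set \<Rightarrow> ((nat \<Rightarrow> complex) \<Rightarrow> complex) topology" where
  "max_ideal_space \<A> = subtopology (product_topology (\<lambda>_. euclidean) \<A>) (characters \<A>)"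

definition iota :: "(nat \<Rightarrow> complex) set \<Rightarrow> nat \<Rightarrow> ((nat \<Rightarrow> complex) \<Rightarrow> complex)" where
  "iota \<A> n = restrict (\<lambda>f. f n) \<A>"

definition mapA :: "(nat \<Rightarrow> complex) set \<Rightarrow> ((nat \<Rightarrow> complex) \<Rightarrow> complex) \<Rightarrow> ((nat \<Rightarrow> complex) \<Rightarrow> complex)" where
  "mapA \<A> \<rho> = restrict (\<lambda>f. \<rho> (shiftA f)) \<A>"

definition join_iter :: "'a topology \<Rightarrow> ('a \<Rightarrow> 'a) \<Rightarrow> 'a set set \<Rightarrow> nat \<Rightarrow> 'a set set" where
  "join_iter X T U n = {topspace X \<inter> (\<Inter>i<n. (T ^^ i) -` V i) | V. \<forall>i<n. V i \<in> U}"

definition cover_number :: "'a topology \<Rightarrow> 'a set set \<Rightarrow> nat" where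
  "cover_number X V = Inf {card W | W. W \<subseteq> V \<and> finite W \<and> topspace X \<subseteq> \<Union> W}"

definition cover_entropy :: "'a topology \<Rightarrow> ('a \<Rightarrow> 'a) \<Rightarrow> 'a set set \<Rightarrow> real" where
  "cover_entropy X T U = lim (\<lambda>n. ln (real (cover_number X (join_iter X T U n))) / real n)"

definition topological_entropy :: "'a topology \<Rightarrow> ('a \<Rightarrow> 'a) \<Rightarrow> ereal" where
  "topological_entropy X T =
     (SUP U \<in> {U. (\<forall>V\<in>U. openin X V) \<and> topspace X \<subseteq> \<Union> U}. ereal (cover_entropy X T U))"

definition anqie_entropy :: "(nat \<Rightarrow> complex) set \<Rightarrow> ereal" where
  "anqie_entropy F = topological_entropy (max_ideal_space (anqie_gen F)) (mapA (anqie_gen F))"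

end

theory Submission
  imports Defs
begin

text \<open>
  Let \<open>K\<close> be the closure of the range of a sequence \<open>p\<close> in a compact Hausdorff space.
  The sequences \<open>g \<circ> p\<close> with \<open>g\<close> continuous on \<open>K\<close> form a unital C*-subalgebra of
  \<open>l\<^sup>\<infinity>(\<nat>)\<close>, \<open>g\<close> is determined by \<open>g \<circ> p\<close> because \<open>p\<close> is dense, and by
  Stone--Weierstrass it is the smallest such algebra containing \<open>g \<circ> p\<close> for any point-separating
  family of \<open>g\<close>'s. Its characters are exactly the evaluations at points of \<open>K\<close>, so evaluation
  is a homeomorphism from \<open>K\<close> onto the maximal ideal space. For \<open>(K, p) = (X\<^sub>0, z)\<close> the
  coordinate functions separate points, which gives (i). For \<open>(K, p) = (Y, \<kappa>)\<close> the shift \<open>B\<close>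
  continues \<open>\<kappa>\<close>, so the algebra is shift invariant and the coordinates of the iterates of \<open>B\<close>
  separate points, which gives (ii); evaluation then conjugates \<open>B\<close> to \<open>A\<close>, and (iii) follows
  because topological entropy is a conjugacy invariant.
\<close>

section \<open>Topological preliminaries\<close>

lemma open_vimage_coordinate:
  assumes "open W" shows "open ((\<lambda>f::'a \<Rightarrow> 'b::topological_space. f i) -` W)"
  by (rule open_vimage[OF assms continuous_on_product_coordinates])

lemma continuous_on_coordinate: "continuous_on S (\<lambda>x::'a \<Rightarrow> 'b::topological_space. x i)"
  by (rule continuous_on_subset[OF continuous_on_product_coordinates]) simp

text \<open>The arities for \<open>t0_space\<close> and \<open>t1_space\<close> are needed for the \<open>t2_space\<close> one to be
  coherent with the existing instance \<open>fun :: (countable, metric_space) metric_space\<close>.\<close>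

instance "fun" :: (type, t0_space) t0_space
proof
  fix x y :: "'a \<Rightarrow> 'b"
  assume "x \<noteq> y"
  then obtain i where "x i \<noteq> y i" by (auto simp: fun_eq_iff)
  then obtain U where "open U" "\<not> (x i \<in> U \<longleftrightarrow> y i \<in> U)"
    by (meson separation_t0)
  then show "\<exists>U. open U \<and> \<not> (x \<in> U \<longleftrightarrow> y \<in> U)"
    by (intro exI[of _ "(\<lambda>f. f i) -` U"]) (simp add: open_vimage_coordinate)
qed

instance "fun" :: (type, t1_space) t1_space
proof
  fix x y :: "'a \<Rightarrow> 'b"
  assume "x \<noteq> y"
  then obtain i where "x i \<noteq> y i" by (auto simp: fun_eq_iff)
  then obtain U where "open U" "x i \<in> U" "y i \<notin> U"
    by (meson t1_space)
  then show "\<exists>U. open U \<and> x \<in> U \<and> y \<notin> U"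
    by (intro exI[of _ "(\<lambda>f. f i) -` U"]) (simp add: open_vimage_coordinate)
qed

instance "fun" :: (type, t2_space) t2_space
proof
  fix x y :: "'a \<Rightarrow> 'b"
  assume "x \<noteq> y"
  then obtain i where "x i \<noteq> y i" by (auto simp: fun_eq_iff)
  then obtain U V where "open U" "open V" "x i \<in> U" "y i \<in> V" "U \<inter> V = {}"
    by (meson hausdorff)
  then show "\<exists>U V. open U \<and> open V \<and> x \<in> U \<and> y \<in> V \<and> U \<inter> V = {}"
    by (intro exI[of _ "(\<lambda>f. f i) -` U"] exI[of _ "(\<lambda>f. f i) -` V"])
      (auto simp: open_vimage_coordinate)
qed

lemma compact_separating_continuous:
  fixes K :: "'a::t2_space set"
  assumes "compact K" "x \<in> K" "y \<in> K" "x \<noteq> y"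
  obtains g :: "'a \<Rightarrow> real" where "continuous_on K g" "g x \<noteq> g y"
proof -
  have "Hausdorff_space (top_of_set K)"
    by (rule Hausdorff_space_subtopology) (metis Hausdorff_space_def disjnt_def hausdorff open_openin)
  moreover have "compact_space (top_of_set K)"
    using assms(1) by (simp add: compact_space_subtopology)
  ultimately have "normal_space (top_of_set K)"
    by (simp add: compact_Hausdorff_or_regular_imp_normal_space)
  moreover have "closedin (top_of_set K) {x}" "closedin (top_of_set K) {y}"
    using assms by (auto intro: closed_subset)
  ultimately obtain g where "continuous_map (top_of_set K) (top_of_set {0..1::real}) g"
      "g ` {x} \<subseteq> {0}" "g ` {y} \<subseteq> {1}"
    using Urysohn_lemma[of "top_of_set K" "{x}" "{y}" 0 1] assms(4) by auto
  then show thesis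
    by (intro that[of g]) (auto simp: continuous_map_in_subtopology)
qed

lemma compact_nonvanishing_sum_norm_square:
  fixes G :: "'a::topological_space \<Rightarrow> 'a \<Rightarrow> complex"
  assumes K: "compact K" and G: "\<And>y. y \<in> K \<Longrightarrow> continuous_on K (G y) \<and> G y y \<noteq> 0"
  obtains F where "F \<subseteq> K" "finite F" "\<And>x. x \<in> K \<Longrightarrow> (\<Sum>y\<in>F. G y x * cnj (G y x)) \<noteq> 0"
proof -
  have "\<forall>y\<in>K. \<exists>U. open U \<and> U \<inter> K = G y -` (- {0}) \<inter> K"
  proof
    fix y
    assume "y \<in> K"
    then have "continuous_on K (G y)"
      using G by blast
    then show "\<exists>U. open U \<and> U \<inter> K = G y -` (- {0}) \<inter> K"
      using continuous_on_open_invariant open_Compl[OF closed_singleton] by blast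
  qed
  from bchoice[OF this] obtain U where U: "\<And>y. y \<in> K \<Longrightarrow> open (U y) \<and> U y \<inter> K = G y -` (- {0}) \<inter> K"
    by blast
  have "y \<in> U y" if "y \<in> K" for y
  proof -
    have "y \<in> G y -` (- {0}) \<inter> K"
      using G[OF that] that by simp
    then show ?thesis
      using U[OF that] by blast
  qed
  then have "K \<subseteq> (\<Union>y\<in>K. U y)"
    by blast
  then obtain F where F: "F \<subseteq> K" "finite F" "K \<subseteq> (\<Union>y\<in>F. U y)"
    using compactE_image[OF K, of K U] U by blast
  have "(\<Sum>y\<in>F. G y x * cnj (G y x)) \<noteq> 0" if "x \<in> K" for x
  proof -
    obtain y where y: "y \<in> F" "x \<in> U y"
      using F(3) \<open>x \<in> K\<close> by blast
    then have "x \<in> G y -` (- {0}) \<inter> K"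
      using U[of y] F(1) \<open>x \<in> K\<close> by blast
    then have "(\<Sum>y\<in>F. (cmod (G y x))\<^sup>2) > 0"
      by (intro sum_pos2[OF F(2) y(1)]) simp_all
    moreover have "(\<Sum>y\<in>F. G y x * cnj (G y x)) = complex_of_real (\<Sum>y\<in>F. (cmod (G y x))\<^sup>2)"
      unfolding of_real_sum by (simp only: complex_norm_square)
    ultimately show ?thesis
      by (metis of_real_eq_0_iff less_irrefl)
  qed
  with F(1,2) show thesis
    by (rule that)
qed

lemma compact_PiE_UNIV:
  fixes S :: "'i \<Rightarrow> 'b::topological_space set"
  assumes "\<And>i. compact (S i)"
  shows "compact (PiE UNIV S)"
proof -
  have "compactin (product_topology (\<lambda>_. euclidean) UNIV) (PiE UNIV S)"
    by (simp add: compactin_PiE assms)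
  then show ?thesis
    by (simp add: euclidean_product_topology)
qed

lemma closure_range_in_compact:
  fixes S :: "'a::t2_space set"
  assumes "compact S" "\<And>n. p n \<in> S"
  shows closure_range_subset: "closure (range p) \<subseteq> S"
    and compact_closure_range: "compact (closure (range p))"
proof -
  show sub: "closure (range p) \<subseteq> S"
    using assms by (intro closure_minimal) (auto intro: compact_imp_closed)
  have "compact (S \<inter> closure (range p))"
    using assms(1) closed_closure by (rule compact_Int_closed)
  moreover have "S \<inter> closure (range p) = closure (range p)"
    using sub by blast
  ultimately show "compact (closure (range p))"
    by simp
qed

section \<open>Unital C*-subalgebras of \<open>l\<^sup>\<infinity>(\<nat>)\<close> and their characters\<close>

lemma
  assumes "unital_cstar_subalg S"
  shows unital_cstar_subalg_one: "(\<lambda>_. 1) \<in> S"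
    and unital_cstar_subalg_add: "f \<in> S \<Longrightarrow> g \<in> S \<Longrightarrow> (\<lambda>n. f n + g n) \<in> S"
    and unital_cstar_subalg_mult: "f \<in> S \<Longrightarrow> g \<in> S \<Longrightarrow> (\<lambda>n. f n * g n) \<in> S"
    and unital_cstar_subalg_smult: "f \<in> S \<Longrightarrow> (\<lambda>n. c * f n) \<in> S"
    and unital_cstar_subalg_cnj: "f \<in> S \<Longrightarrow> (\<lambda>n. cnj (f n)) \<in> S"
    and unital_cstar_subalg_uniform_limit:
      "(\<And>k. gs k \<in> S) \<Longrightarrow> uniform_limit UNIV gs g sequentially \<Longrightarrow> g \<in> S"
  using assms unfolding unital_cstar_subalg_def by blast+

lemma unital_cstar_subalg_const: "unital_cstar_subalg S \<Longrightarrow> (\<lambda>_. c) \<in> S"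
  using unital_cstar_subalg_smult[OF _ unital_cstar_subalg_one, of S c] by simp

lemma
  assumes "\<rho> \<in> characters A"
  shows character_extensional: "\<rho> \<in> extensional A"
    and character_add: "f \<in> A \<Longrightarrow> g \<in> A \<Longrightarrow> \<rho> (\<lambda>n. f n + g n) = \<rho> f + \<rho> g"
    and character_mult: "f \<in> A \<Longrightarrow> g \<in> A \<Longrightarrow> \<rho> (\<lambda>n. f n * g n) = \<rho> f * \<rho> g"
    and character_smult: "f \<in> A \<Longrightarrow> \<rho> (\<lambda>n. c * f n) = c * \<rho> f"
    and character_one: "\<rho> (\<lambda>_. 1) = 1"
  using assms unfolding characters_def by blast+

lemma character_const:
  assumes "\<rho> \<in> characters A" "(\<lambda>_. 1) \<in> A"
  shows "\<rho> (\<lambda>_. c) = c"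
  using character_smult[OF assms, of c] character_one[OF assms(1)] by simp

lemma topspace_max_ideal_space: "topspace (max_ideal_space A) = characters A"
proof -
  have "characters A \<subseteq> PiE A (\<lambda>_. UNIV)"
    using character_extensional by (auto simp: PiE_iff extensional_def)
  then show ?thesis
    unfolding max_ideal_space_def by auto
qed

lemma shift_invariant_shift_iterate:
  assumes "shift_invariant S" "a \<in> S"
  shows "(\<lambda>n. a (n + k)) \<in> S"
proof (induction k)
  case 0
  then show ?case
    using assms(2) by simp
next
  case (Suc k)
  then have "shiftA (\<lambda>n. a (n + k)) \<in> S"
    using assms(1) unfolding shift_invariant_def by blast
  then show ?case
    by (simp add: shiftA_def)
qed

section \<open>Topological entropy is a conjugacy invariant\<close>

lemma funpow_semiconjugate:
  assumes S: "S ` topspace X \<subseteq> topspace X"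
    and conj: "\<And>x. x \<in> topspace X \<Longrightarrow> \<phi> (S x) = T (\<phi> x)"
    and x: "x \<in> topspace X"
  shows "(S ^^ i) x \<in> topspace X \<and> \<phi> ((S ^^ i) x) = (T ^^ i) (\<phi> x)"
  using S conj x by (induction i) auto

lemma Inter_funpow_vimage_preimage:
  assumes \<phi>: "\<phi> ` topspace X \<subseteq> topspace Y"
    and S: "S ` topspace X \<subseteq> topspace X"
    and conj: "\<And>x. x \<in> topspace X \<Longrightarrow> \<phi> (S x) = T (\<phi> x)"
  defines "P \<equiv> \<lambda>W. topspace X \<inter> \<phi> -` W"
  shows "topspace X \<inter> (\<Inter>i<n. (S ^^ i) -` P (V i)) = P (topspace Y \<inter> (\<Inter>i<n. (T ^^ i) -` V i))"
proof -
  have iff: "(S ^^ i) x \<in> P (V i) \<longleftrightarrow> (T ^^ i) (\<phi> x) \<in> V i" if "x \<in> topspace X" for x i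
    using funpow_semiconjugate[of S X \<phi> T, OF S conj that] unfolding P_def by auto
  show ?thesis
  proof (rule set_eqI)
    fix x
    show "x \<in> topspace X \<inter> (\<Inter>i<n. (S ^^ i) -` P (V i)) \<longleftrightarrow>
        x \<in> P (topspace Y \<inter> (\<Inter>i<n. (T ^^ i) -` V i))"
    proof (cases "x \<in> topspace X")
      case True
      then have "\<phi> x \<in> topspace Y"
        using \<phi> by blast
      with iff[OF True] True show ?thesis
        unfolding P_def by simp
    qed (simp add: P_def)
  qed
qed

lemma join_iter_preimage:
  assumes \<phi>: "\<phi> ` topspace X \<subseteq> topspace Y"
    and S: "S ` topspace X \<subseteq> topspace X"
    and conj: "\<And>x. x \<in> topspace X \<Longrightarrow> \<phi> (S x) = T (\<phi> x)"
  defines "P \<equiv> \<lambda>W. topspace X \<inter> \<phi> -` W"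
  shows "join_iter X S (P ` U) n = P ` join_iter Y T U n"
proof -
  have key: "topspace X \<inter> (\<Inter>i<n. (S ^^ i) -` P (V i)) = P (topspace Y \<inter> (\<Inter>i<n. (T ^^ i) -` V i))"
    for V
    unfolding P_def by (rule Inter_funpow_vimage_preimage[OF \<phi> S conj])
  show ?thesis
  proof (intro set_eqI iffI)
    fix W
    assume "W \<in> join_iter X S (P ` U) n"
    then obtain V' where W: "W = topspace X \<inter> (\<Inter>i<n. (S ^^ i) -` V' i)" and V': "\<forall>i<n. V' i \<in> P ` U"
      unfolding join_iter_def by blast
    then have "\<forall>i. \<exists>V. i < n \<longrightarrow> V \<in> U \<and> V' i = P V"
      by blast
    then obtain V where V: "\<And>i. i < n \<Longrightarrow> V i \<in> U \<and> V' i = P (V i)"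
      by metis
    then have "W = topspace X \<inter> (\<Inter>i<n. (S ^^ i) -` P (V i))"
      unfolding W by (intro arg_cong2[where f="(\<inter>)"] INF_cong) auto
    also have "\<dots> = P (topspace Y \<inter> (\<Inter>i<n. (T ^^ i) -` V i))"
      by (rule key)
    finally have "W = P (topspace Y \<inter> (\<Inter>i<n. (T ^^ i) -` V i))" .
    moreover have "topspace Y \<inter> (\<Inter>i<n. (T ^^ i) -` V i) \<in> join_iter Y T U n"
      unfolding join_iter_def using V by (intro CollectI exI[of _ V]) simp
    ultimately show "W \<in> P ` join_iter Y T U n"
      by (rule image_eqI)
  next
    fix W
    assume "W \<in> P ` join_iter Y T U n"
    then obtain V where "W = P (topspace Y \<inter> (\<Inter>i<n. (T ^^ i) -` V i))" "\<forall>i<n. V i \<in> U"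
      unfolding join_iter_def by blast
    then show "W \<in> join_iter X S (P ` U) n"
      unfolding join_iter_def key[symmetric] by (intro CollectI exI[of _ "\<lambda>i. P (V i)"]) simp
  qed
qed

lemma preimage_cover_iff:
  assumes "\<phi> ` topspace X = topspace Y"
  shows "topspace X \<subseteq> \<Union> ((\<lambda>W. topspace X \<inter> \<phi> -` W) ` \<W>) \<longleftrightarrow> topspace Y \<subseteq> \<Union> \<W>"
proof
  assume cover: "topspace X \<subseteq> \<Union> ((\<lambda>W. topspace X \<inter> \<phi> -` W) ` \<W>)"
  show "topspace Y \<subseteq> \<Union> \<W>"
  proof
    fix y
    assume "y \<in> topspace Y"
    then obtain x where "x \<in> topspace X" "y = \<phi> x"
      using assms by (metis imageE)
    with cover show "y \<in> \<Union> \<W>"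
      by blast
  qed
next
  assume cover: "topspace Y \<subseteq> \<Union> \<W>"
  show "topspace X \<subseteq> \<Union> ((\<lambda>W. topspace X \<inter> \<phi> -` W) ` \<W>)"
  proof
    fix x
    assume "x \<in> topspace X"
    then have "\<phi> x \<in> \<Union> \<W>"
      using assms cover by blast
    with \<open>x \<in> topspace X\<close> show "x \<in> \<Union> ((\<lambda>W. topspace X \<inter> \<phi> -` W) ` \<W>)"
      by blast
  qed
qed

lemma inj_on_preimage:
  assumes \<phi>: "\<phi> ` topspace X = topspace Y"
    and \<V>: "\<And>W. W \<in> \<V> \<Longrightarrow> W \<subseteq> topspace Y"
  shows "inj_on (\<lambda>W. topspace X \<inter> \<phi> -` W) \<V>"
proof -
  have "\<phi> ` (topspace X \<inter> \<phi> -` C) = C" if C: "C \<in> \<V>" for C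
  proof
    show "\<phi> ` (topspace X \<inter> \<phi> -` C) \<subseteq> C"
      by blast
    show "C \<subseteq> \<phi> ` (topspace X \<inter> \<phi> -` C)"
    proof
      fix y
      assume "y \<in> C"
      then have "y \<in> \<phi> ` topspace X"
        using \<V>[OF C] \<phi> by blast
      then obtain x where "x \<in> topspace X" "y = \<phi> x"
        by blast
      with \<open>y \<in> C\<close> show "y \<in> \<phi> ` (topspace X \<inter> \<phi> -` C)"
        by blast
    qed
  qed
  then show ?thesis
    by (intro inj_onI) (metis (no_types, lifting))
qed

lemma cover_number_preimage:
  assumes \<phi>: "\<phi> ` topspace X = topspace Y"
    and \<V>: "\<And>W. W \<in> \<V> \<Longrightarrow> W \<subseteq> topspace Y"
  defines "P \<equiv> \<lambda>W. topspace X \<inter> \<phi> -` W"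
  shows "cover_number X (P ` \<V>) = cover_number Y \<V>"
proof -
  have inj: "inj_on P \<V>"
    unfolding P_def using \<phi> \<V> by (rule inj_on_preimage)
  have covers: "topspace X \<subseteq> \<Union> (P ` \<W>) \<longleftrightarrow> topspace Y \<subseteq> \<Union> \<W>" for \<W>
    unfolding P_def using \<phi> by (rule preimage_cover_iff)
  have "{card \<W> |\<W>. \<W> \<subseteq> P ` \<V> \<and> finite \<W> \<and> topspace X \<subseteq> \<Union> \<W>}
      = {card \<W> |\<W>. \<W> \<subseteq> \<V> \<and> finite \<W> \<and> topspace Y \<subseteq> \<Union> \<W>}"
  proof (intro set_eqI iffI)
    fix c
    assume "c \<in> {card \<W> |\<W>. \<W> \<subseteq> P ` \<V> \<and> finite \<W> \<and> topspace X \<subseteq> \<Union> \<W>}"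
    then obtain \<W> where "c = card (P ` \<W>)" "\<W> \<subseteq> \<V>" "finite (P ` \<W>)" "topspace X \<subseteq> \<Union> (P ` \<W>)"
      by (auto simp: subset_image_iff)
    moreover have "inj_on P \<W>"
      using inj \<open>\<W> \<subseteq> \<V>\<close> by (rule inj_on_subset)
    ultimately show "c \<in> {card \<W> |\<W>. \<W> \<subseteq> \<V> \<and> finite \<W> \<and> topspace Y \<subseteq> \<Union> \<W>}"
      using covers by (auto simp: card_image finite_image_iff)
  next
    fix c
    assume "c \<in> {card \<W> |\<W>. \<W> \<subseteq> \<V> \<and> finite \<W> \<and> topspace Y \<subseteq> \<Union> \<W>}"
    then obtain \<W> where "c = card \<W>" "\<W> \<subseteq> \<V>" "finite \<W>" "topspace Y \<subseteq> \<Union> \<W>"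
      by blast
    moreover have "inj_on P \<W>"
      using inj \<open>\<W> \<subseteq> \<V>\<close> by (rule inj_on_subset)
    ultimately show "c \<in> {card \<W> |\<W>. \<W> \<subseteq> P ` \<V> \<and> finite \<W> \<and> topspace X \<subseteq> \<Union> \<W>}"
      using covers by (intro CollectI exI[of _ "P ` \<W>"]) (auto simp: card_image)
  qed
  then show ?thesis
    unfolding cover_number_def by simp
qed

lemma topological_entropy_factor_le:
  assumes \<phi>: "continuous_map X Y \<phi>" "\<phi> ` topspace X = topspace Y"
    and S: "S ` topspace X \<subseteq> topspace X"
    and conj: "\<And>x. x \<in> topspace X \<Longrightarrow> \<phi> (S x) = T (\<phi> x)"
  shows "topological_entropy Y T \<le> topological_entropy X S"
  unfolding topological_entropy_def
proof (rule SUP_least)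
  define P where "P W = topspace X \<inter> \<phi> -` W" for W
  fix U
  assume U: "U \<in> {U. (\<forall>V\<in>U. openin Y V) \<and> topspace Y \<subseteq> \<Union> U}"
  have "cover_number X (join_iter X S (P ` U) n) = cover_number Y (join_iter Y T U n)" for n
  proof -
    have "join_iter X S (P ` U) n = P ` join_iter Y T U n"
      unfolding P_def by (rule join_iter_preimage[OF equalityD1[OF \<phi>(2)] S conj])
    also have "cover_number X \<dots> = cover_number Y (join_iter Y T U n)"
      unfolding P_def by (rule cover_number_preimage[OF \<phi>(2)]) (auto simp: join_iter_def)
    finally show ?thesis .
  qed
  then have "cover_entropy X S (P ` U) = cover_entropy Y T U"
    unfolding cover_entropy_def by simp
  moreover have "P ` U \<in> {U. (\<forall>V\<in>U. openin X V) \<and> topspace X \<subseteq> \<Union> U}"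
  proof -
    have "openin X (P V)" if "V \<in> U" for V
    proof -
      have "P V = {x \<in> topspace X. \<phi> x \<in> V}"
        unfolding P_def by blast
      then show ?thesis
        using openin_continuous_map_preimage[OF \<phi>(1)] U that by simp
    qed
    moreover have "topspace X \<subseteq> \<Union> (P ` U)"
      unfolding P_def preimage_cover_iff[OF \<phi>(2)] using U by blast
    ultimately show ?thesis
      by blast
  qed
  then have "ereal (cover_entropy X S (P ` U))
      \<le> (SUP U \<in> {U. (\<forall>V\<in>U. openin X V) \<and> topspace X \<subseteq> \<Union> U}. ereal (cover_entropy X S U))"
    by (rule SUP_upper)
  ultimately show "ereal (cover_entropy Y T U)
      \<le> (SUP U \<in> {U. (\<forall>V\<in>U. openin X V) \<and> topspace X \<subseteq> \<Union> U}. ereal (cover_entropy X S U))"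
    by simp
qed

lemma topological_entropy_conjugate:
  assumes \<phi>: "homeomorphic_map X Y \<phi>"
    and S: "S ` topspace X \<subseteq> topspace X"
    and conj: "\<And>x. x \<in> topspace X \<Longrightarrow> \<phi> (S x) = T (\<phi> x)"
  shows "topological_entropy Y T = topological_entropy X S"
proof (rule antisym)
  have surj: "\<phi> ` topspace X = topspace Y"
    using \<phi> by (rule homeomorphic_imp_surjective_map)
  show "topological_entropy Y T \<le> topological_entropy X S"
    using homeomorphic_imp_continuous_map[OF \<phi>] surj S conj by (rule topological_entropy_factor_le)
  obtain \<psi> where \<psi>: "homeomorphic_maps X Y \<phi> \<psi>"
    using \<phi> homeomorphic_map_maps by blast
  then have \<psi>\<phi>: "\<And>x. x \<in> topspace X \<Longrightarrow> \<psi> (\<phi> x) = x" and \<psi>_cont: "continuous_map Y X \<psi>"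
    by (auto simp: homeomorphic_maps_def)
  have \<psi>_surj: "\<psi> ` topspace Y = topspace X"
    using \<psi> unfolding homeomorphic_maps_sym[of X]
    by (intro homeomorphic_imp_surjective_map homeomorphic_maps_imp_map)
  have preimage: "\<exists>x\<in>topspace X. y = \<phi> x" if "y \<in> topspace Y" for y
    using that surj by (metis imageE)
  have T: "T ` topspace Y \<subseteq> topspace Y"
  proof (rule image_subsetI)
    fix y
    assume "y \<in> topspace Y"
    then obtain x where x: "x \<in> topspace X" "y = \<phi> x"
      using preimage by blast
    then have "\<phi> (S x) \<in> topspace Y"
      using S surj by blast
    then show "T y \<in> topspace Y"
      using conj x by simp
  qed
  have "\<psi> (T y) = S (\<psi> y)" if "y \<in> topspace Y" for y
  proof -
    obtain x where x: "x \<in> topspace X" "y = \<phi> x"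
      using preimage \<open>y \<in> topspace Y\<close> by blast
    then have "S x \<in> topspace X"
      using S by blast
    then have "\<psi> (\<phi> (S x)) = S x"
      by (rule \<psi>\<phi>)
    with x show ?thesis
      using conj \<psi>\<phi> by simp
  qed
  then show "topological_entropy X S \<le> topological_entropy Y T"
    by (rule topological_entropy_factor_le[OF \<psi>_cont \<psi>_surj T])
qed

section \<open>Continuous functions sampled along a dense sequence\<close>

locale sequence_closure =
  fixes p :: "nat \<Rightarrow> 'a::t2_space" and K :: "'a set"
  assumes K_def: "K = closure (range p)" and compact_K: "compact K"
begin

definition pullback_alg :: "(nat \<Rightarrow> complex) set" where
  "pullback_alg = (\<lambda>g. g \<circ> p) ` {g. continuous_on K g}"

lemma pullback_alg_iff: "a \<in> pullback_alg \<longleftrightarrow> (\<exists>g. continuous_on K g \<and> a = (\<lambda>n. g (p n)))"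
  unfolding pullback_alg_def by (auto simp: comp_def)

lemma pullback_in_alg: "continuous_on K g \<Longrightarrow> (\<lambda>n. g (p n)) \<in> pullback_alg"
  unfolding pullback_alg_iff by blast

lemma p_in_K: "p n \<in> K"
  unfolding K_def by (simp add: closure_subset[THEN subsetD])

lemma closed_K: "closed K"
  by (simp add: K_def)

lemma le_on_K_from_sequence:
  fixes d :: "'a \<Rightarrow> real"
  assumes "continuous_on K d" "\<And>n. d (p n) \<le> c" "x \<in> K"
  shows "d x \<le> c"
proof -
  have "closed {x \<in> K. d x \<le> c}"
    using continuous_on_closed_Collect_le[OF assms(1) continuous_on_const closed_K] by simp
  moreover have "range p \<subseteq> {x \<in> K. d x \<le> c}"
    using assms(2) p_in_K by auto
  ultimately have "K \<subseteq> {x \<in> K. d x \<le> c}"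
    unfolding K_def by (rule closure_minimal[rotated])
  then show ?thesis
    using assms(3) by blast
qed

lemma eq_on_K_from_sequence:
  fixes g h :: "'a \<Rightarrow> complex"
  assumes "continuous_on K g" "continuous_on K h" "g \<circ> p = h \<circ> p" "x \<in> K"
  shows "g x = h x"
proof -
  have "norm (g x - h x) \<le> 0"
  proof (rule le_on_K_from_sequence[OF _ _ assms(4)])
    show "continuous_on K (\<lambda>x. norm (g x - h x))"
      using assms(1,2) by (intro continuous_intros)
    show "norm (g (p n) - h (p n)) \<le> 0" for n
      using fun_cong[OF assms(3), of n] by simp
  qed
  then show ?thesis by simp
qed

lemma uniformly_Cauchy_on_K_from_sequence:
  assumes G: "\<And>k. continuous_on K (G k)"
    and Cauchy: "uniformly_Cauchy_on UNIV (\<lambda>k n. G k (p n))"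
  shows "uniformly_Cauchy_on K G"
proof (rule uniformly_Cauchy_onI)
  fix e :: real
  assume "e > 0"
  then have "e/2 > 0" by simp
  then obtain M where M: "\<forall>n\<in>UNIV. \<forall>m\<ge>M. \<forall>k\<ge>M. dist (G m (p n)) (G k (p n)) < e/2"
    using Cauchy unfolding uniformly_Cauchy_on_def by blast
  show "\<exists>M. \<forall>x\<in>K. \<forall>m\<ge>M. \<forall>k\<ge>M. dist (G m x) (G k x) < e"
  proof (intro exI[of _ M] ballI allI impI)
    fix x m k
    assume "x \<in> K" "m \<ge> M" "k \<ge> M"
    have "dist (G m x) (G k x) \<le> e/2"
    proof (rule le_on_K_from_sequence[OF _ _ \<open>x \<in> K\<close>])
      show "continuous_on K (\<lambda>x. dist (G m x) (G k x))"
        using G by (intro continuous_on_dist)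
      show "dist (G m (p n)) (G k (p n)) \<le> e/2" for n
        using M \<open>m \<ge> M\<close> \<open>k \<ge> M\<close> by (meson UNIV_I less_imp_le)
    qed
    then show "dist (G m x) (G k x) < e"
      using \<open>e > 0\<close> by linarith
  qed
qed

lemma uniform_limit_in_pullback_alg:
  assumes G: "\<And>k. continuous_on K (G k)"
    and lim: "uniform_limit UNIV (\<lambda>k n. G k (p n)) a sequentially"
  shows "a \<in> pullback_alg"
proof -
  have "uniformly_convergent_on UNIV (\<lambda>k n. G k (p n))"
    using lim unfolding uniformly_convergent_on_def by blast
  then have "uniformly_Cauchy_on K G"
    by (intro uniformly_Cauchy_on_K_from_sequence G uniformly_convergent_Cauchy)
  then obtain l where l: "uniform_limit K G l sequentially"
    using Cauchy_uniformly_convergent unfolding uniformly_convergent_on_def by blast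
  have "a = (\<lambda>n. l (p n))"
  proof
    fix n
    have "(\<lambda>k. G k (p n)) \<longlonglongrightarrow> a n"
      using tendsto_uniform_limitI[OF lim, of n] by simp
    moreover have "(\<lambda>k. G k (p n)) \<longlonglongrightarrow> l (p n)"
      using tendsto_uniform_limitI[OF l p_in_K] .
    ultimately show "a n = l (p n)"
      by (rule LIMSEQ_unique)
  qed
  moreover have "continuous_on K l"
    by (rule uniform_limit_theorem[OF _ l]) (auto simp: G)
  ultimately show ?thesis
    by (simp add: pullback_in_alg)
qed

lemma unital_cstar_subalg_pullback_alg: "unital_cstar_subalg pullback_alg"
  unfolding unital_cstar_subalg_def
proof (intro conjI ballI allI impI)
  show "bounded_seq a" if a: "a \<in> pullback_alg" for a
  proof -
    obtain g where g: "continuous_on K g" "a = (\<lambda>n. g (p n))"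
      using a unfolding pullback_alg_iff by blast
    have "bounded (g ` K)"
      using compact_continuous_image[OF g(1) compact_K] by (rule compact_imp_bounded)
    moreover have "range a \<subseteq> g ` K"
      using g(2) p_in_K by auto
    ultimately show ?thesis
      unfolding bounded_seq_def by (rule bounded_subset)
  qed
  show "(\<lambda>_. 1) \<in> pullback_alg"
    using pullback_in_alg[OF continuous_on_const] by simp
  show "(\<lambda>n. a n + b n) \<in> pullback_alg" "(\<lambda>n. a n * b n) \<in> pullback_alg"
    if ab: "a \<in> pullback_alg" "b \<in> pullback_alg" for a b
  proof -
    obtain g h where "continuous_on K g" "a = (\<lambda>n. g (p n))" "continuous_on K h" "b = (\<lambda>n. h (p n))"
      using ab unfolding pullback_alg_iff by blast
    then show "(\<lambda>n. a n + b n) \<in> pullback_alg" "(\<lambda>n. a n * b n) \<in> pullback_alg"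
      using pullback_in_alg[OF continuous_on_add] pullback_in_alg[OF continuous_on_mult] by auto
  qed
  show "(\<lambda>n. c * a n) \<in> pullback_alg" "(\<lambda>n. cnj (a n)) \<in> pullback_alg"
    if a: "a \<in> pullback_alg" for a c
  proof -
    obtain g where "continuous_on K g" "a = (\<lambda>n. g (p n))"
      using a unfolding pullback_alg_iff by blast
    then show "(\<lambda>n. c * a n) \<in> pullback_alg" "(\<lambda>n. cnj (a n)) \<in> pullback_alg"
      using pullback_in_alg[OF continuous_on_mult[OF continuous_on_const]]
        pullback_in_alg[OF continuous_on_cnj] by auto
  qed
  fix as a
  assume as: "(\<forall>k. as k \<in> pullback_alg) \<and> uniform_limit UNIV as a sequentially"
  then have "\<forall>k. \<exists>g. continuous_on K g \<and> as k = (\<lambda>n. g (p n))"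
    unfolding pullback_alg_iff by blast
  then obtain G where G: "\<And>k. continuous_on K (G k)" "\<And>k. as k = (\<lambda>n. G k (p n))"
    by metis
  have "as = (\<lambda>k n. G k (p n))"
    using G(2) by (rule ext)
  with as show "a \<in> pullback_alg"
    using uniform_limit_in_pullback_alg[of G a] G(1) by simp
qed

definition real_pullbacks :: "(nat \<Rightarrow> complex) set \<Rightarrow> ('a \<Rightarrow> real) set" where
  "real_pullbacks S = {r. continuous_on K r \<and> (\<lambda>n. complex_of_real (r (p n))) \<in> S}"

lemma Re_Im_in_real_pullbacks:
  assumes S: "unital_cstar_subalg S" and gc: "continuous_on K g" and gS: "(\<lambda>n. g (p n)) \<in> S"
  shows "(\<lambda>x. Re (g x)) \<in> real_pullbacks S" "(\<lambda>x. Im (g x)) \<in> real_pullbacks S"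
proof -
  have cnjS: "(\<lambda>n. cnj (g (p n))) \<in> S"
    by (rule unital_cstar_subalg_cnj[OF S gS])
  have "(\<lambda>n. g (p n) + cnj (g (p n))) \<in> S"
    by (rule unital_cstar_subalg_add[OF S gS cnjS])
  then have "(\<lambda>n. (1/2) * (g (p n) + cnj (g (p n)))) \<in> S"
    by (rule unital_cstar_subalg_smult[OF S])
  moreover have "(\<lambda>n. g (p n) + (-1) * cnj (g (p n))) \<in> S"
    by (rule unital_cstar_subalg_add[OF S gS unital_cstar_subalg_smult[OF S cnjS]])
  then have "(\<lambda>n. (-\<i>/2) * (g (p n) + (-1) * cnj (g (p n)))) \<in> S"
    by (rule unital_cstar_subalg_smult[OF S])
  moreover have "(\<lambda>n. (1/2) * (g (p n) + cnj (g (p n)))) = (\<lambda>n. complex_of_real (Re (g (p n))))"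
    "(\<lambda>n. (-\<i>/2) * (g (p n) + (-1) * cnj (g (p n)))) = (\<lambda>n. complex_of_real (Im (g (p n))))"
    by (simp_all add: fun_eq_iff complex_eq_iff)
  moreover have "continuous_on K (\<lambda>x. Re (g x))" "continuous_on K (\<lambda>x. Im (g x))"
    using gc by (rule continuous_on_Re, rule continuous_on_Im)
  ultimately show "(\<lambda>x. Re (g x)) \<in> real_pullbacks S" "(\<lambda>x. Im (g x)) \<in> real_pullbacks S"
    unfolding real_pullbacks_def by simp_all
qed

lemma function_ring_on_real_pullbacks:
  assumes S: "unital_cstar_subalg S"
    and Gs: "\<And>g. g \<in> Gs \<Longrightarrow> continuous_on K g \<and> (\<lambda>n. g (p n)) \<in> S"
    and sep: "\<And>x y. x \<in> K \<Longrightarrow> y \<in> K \<Longrightarrow> x \<noteq> y \<Longrightarrow> \<exists>g\<in>Gs. g x \<noteq> g y"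
  shows "function_ring_on (real_pullbacks S) K"
proof
  show "compact K" by (rule compact_K)
  show "continuous_on K f" if "f \<in> real_pullbacks S" for f
    using that by (simp add: real_pullbacks_def)
  show "(\<lambda>x. f x + g x) \<in> real_pullbacks S" "(\<lambda>x. f x * g x) \<in> real_pullbacks S"
    if fg: "f \<in> real_pullbacks S" "g \<in> real_pullbacks S" for f g
  proof -
    have "continuous_on K f" "continuous_on K g"
      "(\<lambda>n. complex_of_real (f (p n))) \<in> S" "(\<lambda>n. complex_of_real (g (p n))) \<in> S"
      using fg by (simp_all add: real_pullbacks_def)
    then show "(\<lambda>x. f x + g x) \<in> real_pullbacks S" "(\<lambda>x. f x * g x) \<in> real_pullbacks S"
      unfolding real_pullbacks_def
      using unital_cstar_subalg_add[OF S] unital_cstar_subalg_mult[OF S]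
      by (simp_all add: continuous_on_add continuous_on_mult)
  qed
  show "(\<lambda>_. c) \<in> real_pullbacks S" for c
    using unital_cstar_subalg_const[OF S] by (simp add: real_pullbacks_def)
  show "\<exists>f\<in>real_pullbacks S. f x \<noteq> f y" if "x \<in> K" "y \<in> K" "x \<noteq> y" for x y
  proof -
    obtain g where g: "g \<in> Gs" "g x \<noteq> g y"
      using sep[OF \<open>x \<in> K\<close> \<open>y \<in> K\<close> \<open>x \<noteq> y\<close>] by blast
    note Re_Im = Re_Im_in_real_pullbacks[OF S conjunct1[OF Gs[OF g(1)]] conjunct2[OF Gs[OF g(1)]]]
    show ?thesis
    proof (cases "Re (g x) = Re (g y)")
      case True
      with g(2) have "Im (g x) \<noteq> Im (g y)"
        by (simp add: complex_eq_iff)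
      then show ?thesis
        by (rule bexI[where x="\<lambda>x. Im (g x)"]) (rule Re_Im(2))
    next
      case False
      then show ?thesis
        by (rule bexI[where x="\<lambda>x. Re (g x)"]) (rule Re_Im(1))
    qed
  qed
qed

lemma real_pullback_in_subalg:
  assumes S: "unital_cstar_subalg S"
    and Gs: "\<And>g. g \<in> Gs \<Longrightarrow> continuous_on K g \<and> (\<lambda>n. g (p n)) \<in> S"
    and sep: "\<And>x y. x \<in> K \<Longrightarrow> y \<in> K \<Longrightarrow> x \<noteq> y \<Longrightarrow> \<exists>g\<in>Gs. g x \<noteq> g y"
    and r: "continuous_on K r"
  shows "(\<lambda>n. complex_of_real (r (p n))) \<in> S"
proof -
  interpret function_ring_on "real_pullbacks S" K
    using S Gs sep by (rule function_ring_on_real_pullbacks)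
  obtain F where F: "F \<in> UNIV \<rightarrow> real_pullbacks S" "uniform_limit K F r sequentially"
    using Stone_Weierstrass[OF r] by blast
  have "uniform_limit UNIV (\<lambda>k n. F k (p n)) (\<lambda>n. r (p n)) sequentially"
    using p_in_K by (intro uniform_limit_compose'[OF F(2)]) auto
  then have lim: "uniform_limit UNIV (\<lambda>k n. complex_of_real (F k (p n))) (\<lambda>n. complex_of_real (r (p n))) sequentially"
    by (rule bounded_linear.uniform_limit[OF bounded_linear_of_real])
  have mem: "(\<lambda>n. complex_of_real (F k (p n))) \<in> S" for k
    using F(1) by (auto simp: real_pullbacks_def)
  show ?thesis
    by (rule unital_cstar_subalg_uniform_limit[OF S mem lim])
qed

lemma pullback_alg_subset:
  assumes S: "unital_cstar_subalg S"
    and Gs: "\<And>g. g \<in> Gs \<Longrightarrow> continuous_on K g \<and> (\<lambda>n. g (p n)) \<in> S"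
    and sep: "\<And>x y. x \<in> K \<Longrightarrow> y \<in> K \<Longrightarrow> x \<noteq> y \<Longrightarrow> \<exists>g\<in>Gs. g x \<noteq> g y"
  shows "pullback_alg \<subseteq> S"
proof
  fix a
  assume "a \<in> pullback_alg"
  then obtain g where g: "continuous_on K g" "a = (\<lambda>n. g (p n))"
    unfolding pullback_alg_iff by blast
  have "(\<lambda>n. complex_of_real (Re (g (p n)))) \<in> S" "(\<lambda>n. complex_of_real (Im (g (p n)))) \<in> S"
    using real_pullback_in_subalg[OF S Gs sep continuous_on_Re[OF g(1)]]
      real_pullback_in_subalg[OF S Gs sep continuous_on_Im[OF g(1)]] by simp_all
  then have "(\<lambda>n. complex_of_real (Re (g (p n))) + \<i> * complex_of_real (Im (g (p n)))) \<in> S"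
    using S by (intro unital_cstar_subalg_add unital_cstar_subalg_smult)
  moreover have "(\<lambda>n. complex_of_real (Re (g (p n))) + \<i> * complex_of_real (Im (g (p n)))) = a"
    by (simp add: g(2) fun_eq_iff complex_eq_iff)
  ultimately show "a \<in> S"
    by simp
qed

lemma cstar_gen_eq_pullback_alg:
  assumes Gs: "\<And>g. g \<in> Gs \<Longrightarrow> continuous_on K g"
    and sep: "\<And>x y. x \<in> K \<Longrightarrow> y \<in> K \<Longrightarrow> x \<noteq> y \<Longrightarrow> \<exists>g\<in>Gs. g x \<noteq> g y"
  shows "cstar_gen ((\<lambda>g. g \<circ> p) ` Gs) = pullback_alg"
proof
  have "(\<lambda>g. g \<circ> p) ` Gs \<subseteq> pullback_alg"
    unfolding pullback_alg_def using Gs by (intro image_mono) blast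
  then show "cstar_gen ((\<lambda>g. g \<circ> p) ` Gs) \<subseteq> pullback_alg"
    unfolding cstar_gen_def using unital_cstar_subalg_pullback_alg by (intro Inter_lower) blast
  show "pullback_alg \<subseteq> cstar_gen ((\<lambda>g. g \<circ> p) ` Gs)"
    unfolding cstar_gen_def
  proof (rule Inter_greatest)
    fix S
    assume "S \<in> {S. unital_cstar_subalg S \<and> (\<lambda>g. g \<circ> p) ` Gs \<subseteq> S}"
    then have S: "unital_cstar_subalg S" and GsS: "\<And>g. g \<in> Gs \<Longrightarrow> g \<circ> p \<in> S"
      by blast+
    have "continuous_on K g \<and> (\<lambda>n. g (p n)) \<in> S" if "g \<in> Gs" for g
      using Gs[OF that] GsS[OF that] by (simp add: comp_def)
    then show "pullback_alg \<subseteq> S"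
      using sep by (rule pullback_alg_subset[OF S])
  qed
qed

text \<open>\<open>lift a\<close> is the continuous function on \<open>K\<close> sampled by \<open>a\<close>; it is unique by
  \<open>eq_on_K_from_sequence\<close>.\<close>

definition lift :: "(nat \<Rightarrow> complex) \<Rightarrow> 'a \<Rightarrow> complex" where
  "lift a = (SOME g. continuous_on K g \<and> a = (\<lambda>n. g (p n)))"

lemma
  assumes "a \<in> pullback_alg"
  shows continuous_on_lift: "continuous_on K (lift a)"
    and lift_pullback_eq: "(\<lambda>n. lift a (p n)) = a"
proof -
  have "\<exists>g. continuous_on K g \<and> a = (\<lambda>n. g (p n))"
    using assms unfolding pullback_alg_iff .
  then have "continuous_on K (lift a) \<and> a = (\<lambda>n. lift a (p n))"
    unfolding lift_def by (rule someI_ex)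
  then show "continuous_on K (lift a)" "(\<lambda>n. lift a (p n)) = a"
    by simp_all
qed

lemma lift_pullback:
  assumes "continuous_on K g" "y \<in> K"
  shows "lift (\<lambda>n. g (p n)) y = g y"
proof (rule eq_on_K_from_sequence[OF continuous_on_lift assms(1) _ assms(2)])
  show "(\<lambda>n. g (p n)) \<in> pullback_alg"
    using assms(1) by (rule pullback_in_alg)
  then show "lift (\<lambda>n. g (p n)) \<circ> p = g \<circ> p"
    using lift_pullback_eq by (simp add: comp_def)
qed

definition eval_char :: "'a \<Rightarrow> (nat \<Rightarrow> complex) \<Rightarrow> complex" where
  "eval_char y = restrict (\<lambda>a. lift a y) pullback_alg"

lemma eval_char_pullback:
  assumes "continuous_on K g" "y \<in> K"
  shows "eval_char y (\<lambda>n. g (p n)) = g y"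
  using assms pullback_in_alg[OF assms(1)] by (simp add: eval_char_def lift_pullback)

lemma eval_char_in_characters:
  assumes y: "y \<in> K"
  shows "eval_char y \<in> characters pullback_alg"
  unfolding characters_def
proof (intro CollectI conjI ballI allI)
  show "eval_char y \<in> extensional pullback_alg"
    unfolding eval_char_def by (rule restrict_extensional)
  show "eval_char y (\<lambda>_. 1) = 1"
    using eval_char_pullback[OF continuous_on_const y] by simp
  fix a b c
  assume "a \<in> pullback_alg" "b \<in> pullback_alg"
  then obtain g h where g: "continuous_on K g" "a = (\<lambda>n. g (p n))"
    and h: "continuous_on K h" "b = (\<lambda>n. h (p n))"
    unfolding pullback_alg_iff by blast
  show "eval_char y (\<lambda>n. a n + b n) = eval_char y a + eval_char y b"
    using eval_char_pullback[OF continuous_on_add[OF g(1) h(1)] y]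
    by (simp add: g h eval_char_pullback y)
  show "eval_char y (\<lambda>n. a n * b n) = eval_char y a * eval_char y b"
    using eval_char_pullback[OF continuous_on_mult[OF g(1) h(1)] y]
    by (simp add: g h eval_char_pullback y)
  show "eval_char y (\<lambda>n. c * a n) = c * eval_char y a"
    using eval_char_pullback[OF continuous_on_mult[OF continuous_on_const g(1)] y]
    by (simp add: g eval_char_pullback y)
qed

lemma inj_on_eval_char: "inj_on eval_char K"
proof
  fix x y
  assume "x \<in> K" "y \<in> K" "eval_char x = eval_char y"
  show "x = y"
  proof (rule ccontr)
    assume "x \<noteq> y"
    then obtain g :: "'a \<Rightarrow> real" where g: "continuous_on K g" "g x \<noteq> g y"
      using compact_separating_continuous[OF compact_K \<open>x \<in> K\<close> \<open>y \<in> K\<close>] by blast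
    have cg: "continuous_on K (\<lambda>x. complex_of_real (g x))"
      using g(1) by (rule continuous_on_of_real)
    have "complex_of_real (g x) = complex_of_real (g y)"
      using eval_char_pullback[OF cg \<open>x \<in> K\<close>] eval_char_pullback[OF cg \<open>y \<in> K\<close>]
        \<open>eval_char x = eval_char y\<close> by simp
    with g(2) show False
      by simp
  qed
qed

lemma character_pullback_const:
  assumes "\<rho> \<in> characters pullback_alg"
  shows "\<rho> (\<lambda>_. c) = c"
  by (rule character_const[OF assms unital_cstar_subalg_one[OF unital_cstar_subalg_pullback_alg]])

lemma character_nonvanishing:
  assumes \<rho>: "\<rho> \<in> characters pullback_alg"
    and g: "continuous_on K g" "\<And>x. x \<in> K \<Longrightarrow> g x \<noteq> 0"
  shows "\<rho> (\<lambda>n. g (p n)) \<noteq> 0"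
proof -
  have inv: "continuous_on K (\<lambda>x. inverse (g x))"
    using g by (intro continuous_on_inverse) auto
  have "(\<lambda>n. g (p n) * inverse (g (p n))) = (\<lambda>_. 1)"
    using g(2)[OF p_in_K] by (simp add: fun_eq_iff)
  then have "1 = \<rho> (\<lambda>n. g (p n) * inverse (g (p n)))"
    using character_one[OF \<rho>] by simp
  also have "\<dots> = \<rho> (\<lambda>n. g (p n)) * \<rho> (\<lambda>n. inverse (g (p n)))"
    by (rule character_mult[OF \<rho> pullback_in_alg[OF g(1)] pullback_in_alg[OF inv]])
  finally show ?thesis
    by auto
qed

lemma character_sum_norm_square:
  assumes \<rho>: "\<rho> \<in> characters pullback_alg" and "finite F"
    and G: "\<And>y. y \<in> F \<Longrightarrow> continuous_on K (G y) \<and> \<rho> (\<lambda>n. G y (p n)) = 0"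
  shows "\<rho> (\<lambda>n. \<Sum>y\<in>F. G y (p n) * cnj (G y (p n))) = 0"
  using \<open>finite F\<close> G
proof (induction F rule: finite_induct)
  case empty
  then show ?case
    using character_pullback_const[OF \<rho>, of 0] by simp
next
  case (insert y F)
  have cy: "continuous_on K (G y)" and \<rho>y: "\<rho> (\<lambda>n. G y (p n)) = 0"
    using insert.prems by auto
  have cF: "continuous_on K (\<lambda>x. \<Sum>y\<in>F. G y x * cnj (G y x))"
    using insert.prems by (intro continuous_on_sum continuous_on_mult continuous_on_cnj) auto
  have "\<rho> (\<lambda>n. G y (p n) * cnj (G y (p n))) = \<rho> (\<lambda>n. G y (p n)) * \<rho> (\<lambda>n. cnj (G y (p n)))"
    by (rule character_mult[OF \<rho> pullback_in_alg[OF cy] pullback_in_alg[OF continuous_on_cnj[OF cy]]])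
  also have "\<dots> = 0"
    using \<rho>y by simp
  finally have "\<rho> (\<lambda>n. G y (p n) * cnj (G y (p n))) = 0" .
  moreover have "\<rho> (\<lambda>n. G y (p n) * cnj (G y (p n)) + (\<Sum>y\<in>F. G y (p n) * cnj (G y (p n)))) =
      \<rho> (\<lambda>n. G y (p n) * cnj (G y (p n))) + \<rho> (\<lambda>n. \<Sum>y\<in>F. G y (p n) * cnj (G y (p n)))"
    using character_add[OF \<rho> pullback_in_alg[OF continuous_on_mult[OF cy continuous_on_cnj[OF cy]]]
        pullback_in_alg[OF cF]] .
  moreover have "(\<Sum>y\<in>insert y F. G y (p n) * cnj (G y (p n))) =
      G y (p n) * cnj (G y (p n)) + (\<Sum>y\<in>F. G y (p n) * cnj (G y (p n)))" for n
    using insert.hyps by (rule sum.insert)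
  ultimately show ?case
    using insert.IH insert.prems by simp
qed

text \<open>Otherwise compactness gives finitely many \<open>g\<close> killed by \<open>\<rho>\<close> with \<open>\<Sum>|g|\<^sup>2\<close>
  nowhere zero on \<open>K\<close>; that sum is invertible in the algebra, yet also killed by \<open>\<rho>\<close>.\<close>

lemma character_common_zero:
  assumes \<rho>: "\<rho> \<in> characters pullback_alg"
  obtains y where "y \<in> K" "\<And>g. continuous_on K g \<Longrightarrow> \<rho> (\<lambda>n. g (p n)) = 0 \<Longrightarrow> g y = 0"
proof (rule ccontr)
  assume "\<not> thesis"
  with that have "\<forall>y\<in>K. \<exists>g. continuous_on K g \<and> \<rho> (\<lambda>n. g (p n)) = 0 \<and> g y \<noteq> 0"
    by blast
  from bchoice[OF this] obtain G
    where G: "\<And>y. y \<in> K \<Longrightarrow> continuous_on K (G y) \<and> \<rho> (\<lambda>n. G y (p n)) = 0 \<and> G y y \<noteq> 0"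
    by blast
  then obtain F where F: "F \<subseteq> K" "finite F" "\<And>x. x \<in> K \<Longrightarrow> (\<Sum>y\<in>F. G y x * cnj (G y x)) \<noteq> 0"
    using compact_nonvanishing_sum_norm_square[OF compact_K, of G] by blast
  have "continuous_on K (\<lambda>x. \<Sum>y\<in>F. G y x * cnj (G y x))"
    using F(1) G by (intro continuous_on_sum continuous_on_mult continuous_on_cnj) auto
  then have "\<rho> (\<lambda>n. \<Sum>y\<in>F. G y (p n) * cnj (G y (p n))) \<noteq> 0"
    using F(3) by (rule character_nonvanishing[OF \<rho>])
  moreover have "\<rho> (\<lambda>n. \<Sum>y\<in>F. G y (p n) * cnj (G y (p n))) = 0"
    using F(1) G by (intro character_sum_norm_square[OF \<rho> F(2)]) auto
  ultimately show False
    by contradiction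
qed

lemma character_eq_eval_char:
  assumes \<rho>: "\<rho> \<in> characters pullback_alg"
  shows "\<exists>y\<in>K. \<rho> = eval_char y"
proof -
  obtain y where y: "y \<in> K" "\<And>g. continuous_on K g \<Longrightarrow> \<rho> (\<lambda>n. g (p n)) = 0 \<Longrightarrow> g y = 0"
    using character_common_zero[OF \<rho>] by blast
  have "\<rho> a = eval_char y a" if a: "a \<in> pullback_alg" for a
  proof -
    have c: "continuous_on K (\<lambda>x. lift a x - \<rho> a)"
      using continuous_on_lift[OF a] by (intro continuous_on_diff continuous_on_const)
    have "\<rho> (\<lambda>n. a n + - \<rho> a) = \<rho> a + \<rho> (\<lambda>_. - \<rho> a)"
      by (rule character_add[OF \<rho> a pullback_in_alg[OF continuous_on_const]])
    then have "\<rho> (\<lambda>n. a n - \<rho> a) = 0"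
      using character_pullback_const[OF \<rho>] by simp
    moreover have "(\<lambda>n. lift a (p n) - \<rho> a) = (\<lambda>n. a n - \<rho> a)"
      using fun_cong[OF lift_pullback_eq[OF a]] by simp
    ultimately have "lift a y - \<rho> a = 0"
      using y(2)[OF c] by simp
    then show ?thesis
      using a by (simp add: eval_char_def)
  qed
  then have "\<rho> = eval_char y"
    using character_extensional[OF \<rho>] eval_char_in_characters[OF y(1), THEN character_extensional]
    by (intro extensionalityI) auto
  with y(1) show ?thesis
    by blast
qed

lemma characters_eq_eval_char_image: "characters pullback_alg = eval_char ` K"
  using character_eq_eval_char eval_char_in_characters by blast

lemma continuous_map_eval_char:
  "continuous_map (top_of_set K) (max_ideal_space pullback_alg) eval_char"
  unfolding max_ideal_space_def continuous_map_in_subtopology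
proof
  show "continuous_map (top_of_set K) (product_topology (\<lambda>_. euclidean) pullback_alg) eval_char"
    unfolding continuous_map_componentwise
  proof
    show "eval_char ` topspace (top_of_set K) \<subseteq> extensional pullback_alg"
      by (auto simp: eval_char_def)
    show "\<forall>a\<in>pullback_alg. continuous_map (top_of_set K) euclidean (\<lambda>y. eval_char y a)"
      using continuous_on_lift by (simp add: eval_char_def)
  qed
  show "eval_char \<in> topspace (top_of_set K) \<rightarrow> characters pullback_alg"
    using eval_char_in_characters by simp
qed

lemma homeomorphic_map_eval_char:
  "homeomorphic_map (top_of_set K) (max_ideal_space pullback_alg) eval_char"
proof (rule continuous_imp_homeomorphic_map[OF continuous_map_eval_char])
  show "compact_space (top_of_set K)"
    using compact_K by (simp add: compact_space_subtopology)
  show "Hausdorff_space (max_ideal_space pullback_alg)"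
    unfolding max_ideal_space_def
    by (intro Hausdorff_space_subtopology Hausdorff_space_product_topology[THEN iffD2]) simp
  show "eval_char ` topspace (top_of_set K) = topspace (max_ideal_space pullback_alg)"
    by (simp add: topspace_max_ideal_space characters_eq_eval_char_image)
  show "inj_on eval_char (topspace (top_of_set K))"
    using inj_on_eval_char by simp
qed

lemma eval_char_p: "eval_char (p n) = iota pullback_alg n"
  unfolding eval_char_def iota_def
  using fun_cong[OF lift_pullback_eq] by (intro restrict_ext) simp

end

locale sequence_closure_shift = sequence_closure +
  fixes T :: "'a \<Rightarrow> 'a"
  assumes continuous_on_T: "continuous_on K T" and T_p: "\<And>n. T (p n) = p (Suc n)"
begin

lemma T_K: "T ` K \<subseteq> K"
proof -
  have "T ` range p \<subseteq> K"
    using T_p p_in_K by (simp add: image_subset_iff)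
  with continuous_on_T closed_K have "T ` closure (range p) \<subseteq> K"
    unfolding K_def by (rule image_closure_subset)
  then show ?thesis
    unfolding K_def .
qed

lemma
  shows continuous_on_funpow_T: "continuous_on K (T ^^ k)"
    and funpow_T_K: "(T ^^ k) ` K \<subseteq> K"
proof (induction k)
  case 0
  show "continuous_on K (T ^^ 0)" "(T ^^ 0) ` K \<subseteq> K"
    by simp_all
next
  case (Suc k)
  show "continuous_on K (T ^^ Suc k)"
    unfolding funpow_Suc_right using continuous_on_T T_K Suc.IH(1)
    by (intro continuous_on_compose) (auto elim: continuous_on_subset)
  show "(T ^^ Suc k) ` K \<subseteq> K"
    unfolding funpow_Suc_right using T_K Suc.IH(2) by (auto simp: image_subset_iff)
qed

lemma funpow_T_p: "(T ^^ k) (p n) = p (n + k)"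
  by (induction k arbitrary: n) (simp_all add: funpow_Suc_right T_p)

lemma shiftA_pullback: "shiftA (\<lambda>n. g (p n)) = (\<lambda>n. g (T (p n)))"
  by (simp add: shiftA_def T_p)

lemma continuous_on_comp_T: "continuous_on K g \<Longrightarrow> continuous_on K (\<lambda>x. g (T x))"
  using continuous_on_compose[OF continuous_on_T continuous_on_subset[OF _ T_K]] by (simp add: comp_def)

lemma shift_invariant_pullback_alg: "shift_invariant pullback_alg"
  unfolding shift_invariant_def
proof
  fix a
  assume "a \<in> pullback_alg"
  then obtain g where "continuous_on K g" "a = (\<lambda>n. g (p n))"
    unfolding pullback_alg_iff by blast
  then show "shiftA a \<in> pullback_alg"
    using pullback_in_alg[OF continuous_on_comp_T] by (simp add: shiftA_pullback)
qed

lemma anqie_gen_eq_pullback_alg: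
  assumes Gs: "\<And>g. g \<in> Gs \<Longrightarrow> continuous_on K g"
    and sep: "\<And>x y. x \<in> K \<Longrightarrow> y \<in> K \<Longrightarrow> x \<noteq> y \<Longrightarrow> \<exists>g\<in>Gs. \<exists>k. g ((T ^^ k) x) \<noteq> g ((T ^^ k) y)"
  shows "anqie_gen ((\<lambda>g. g \<circ> p) ` Gs) = pullback_alg"
proof
  have "(\<lambda>g. g \<circ> p) ` Gs \<subseteq> pullback_alg"
    unfolding pullback_alg_def using Gs by (intro image_mono) blast
  then show "anqie_gen ((\<lambda>g. g \<circ> p) ` Gs) \<subseteq> pullback_alg"
    unfolding anqie_gen_def using unital_cstar_subalg_pullback_alg shift_invariant_pullback_alg
    by (intro Inter_lower) blast
  show "pullback_alg \<subseteq> anqie_gen ((\<lambda>g. g \<circ> p) ` Gs)"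
    unfolding anqie_gen_def
  proof (rule Inter_greatest)
    fix S
    assume "S \<in> {S. unital_cstar_subalg S \<and> shift_invariant S \<and> (\<lambda>g. g \<circ> p) ` Gs \<subseteq> S}"
    then have S: "unital_cstar_subalg S" "shift_invariant S" and GsS: "\<And>g. g \<in> Gs \<Longrightarrow> g \<circ> p \<in> S"
      by blast+
    let ?Gs = "{g \<circ> (T ^^ k) | g k. g \<in> Gs}"
    have "continuous_on K h \<and> (\<lambda>n. h (p n)) \<in> S" if h_in: "h \<in> ?Gs" for h
    proof -
      obtain g k where h: "h = g \<circ> (T ^^ k)" "g \<in> Gs"
        using h_in by blast
      have "continuous_on K h"
        unfolding h(1)
        by (rule continuous_on_compose[OF continuous_on_funpow_T continuous_on_subset[OF Gs[OF h(2)] funpow_T_K]])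
      moreover have "(\<lambda>n. (g \<circ> p) (n + k)) \<in> S"
        by (rule shift_invariant_shift_iterate[OF S(2) GsS[OF h(2)]])
      ultimately show ?thesis
        by (simp add: h(1) funpow_T_p)
    qed
    moreover have "\<exists>h\<in>?Gs. h x \<noteq> h y" if xy: "x \<in> K" "y \<in> K" "x \<noteq> y" for x y
    proof -
      obtain g k where "g \<in> Gs" "g ((T ^^ k) x) \<noteq> g ((T ^^ k) y)"
        using sep[OF xy] by blast
      then show ?thesis
        by (intro bexI[of _ "g \<circ> (T ^^ k)"]) auto
    qed
    ultimately show "pullback_alg \<subseteq> S"
      by (rule pullback_alg_subset[OF S(1)])
  qed
qed

lemma mapA_eval_char:
  assumes y: "y \<in> K"
  shows "mapA pullback_alg (eval_char y) = eval_char (T y)"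
proof -
  have "eval_char y (shiftA a) = lift a (T y)" if a: "a \<in> pullback_alg" for a
  proof -
    have "shiftA a = (\<lambda>n. lift a (T (p n)))"
      using shiftA_pullback[of "lift a"] lift_pullback_eq[OF a] by simp
    then show ?thesis
      using eval_char_pullback[OF continuous_on_comp_T[OF continuous_on_lift[OF a]] y] by simp
  qed
  then show ?thesis
    unfolding mapA_def eval_char_def[of "T y"] by (intro restrict_ext)
qed

lemma max_ideal_space_conjugacy:
  "\<exists>\<Phi>. homeomorphic_map (max_ideal_space pullback_alg) (top_of_set K) \<Phi> \<and>
      (\<forall>n. \<Phi> (iota pullback_alg n) = p n) \<and>
      (\<forall>\<rho> \<in> characters pullback_alg. \<Phi> (mapA pullback_alg \<rho>) = T (\<Phi> \<rho>))"
proof -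
  obtain \<Phi> where \<Phi>: "homeomorphic_maps (top_of_set K) (max_ideal_space pullback_alg) eval_char \<Phi>"
    using homeomorphic_map_eval_char homeomorphic_map_maps by blast
  then have \<Phi>_eval: "\<And>y. y \<in> K \<Longrightarrow> \<Phi> (eval_char y) = y"
    by (simp add: homeomorphic_maps_def)
  have "homeomorphic_map (max_ideal_space pullback_alg) (top_of_set K) \<Phi>"
    using \<Phi> unfolding homeomorphic_maps_sym[of "top_of_set K"] by (rule homeomorphic_maps_imp_map)
  moreover have "\<Phi> (iota pullback_alg n) = p n" for n
    using \<Phi>_eval[OF p_in_K] by (simp flip: eval_char_p)
  moreover have "\<Phi> (mapA pullback_alg \<rho>) = T (\<Phi> \<rho>)" if "\<rho> \<in> characters pullback_alg" for \<rho>
  proof -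
    obtain y where "y \<in> K" "\<rho> = eval_char y"
      using \<open>\<rho> \<in> characters pullback_alg\<close> characters_eq_eval_char_image by blast
    moreover have "T y \<in> K"
      using T_K \<open>y \<in> K\<close> by blast
    ultimately show ?thesis
      by (simp add: mapA_eval_char \<Phi>_eval)
  qed
  ultimately show ?thesis
    by blast
qed

lemma topological_entropy_mapA:
  "topological_entropy (max_ideal_space pullback_alg) (mapA pullback_alg) = topological_entropy (top_of_set K) T"
  using T_K mapA_eval_char by (intro topological_entropy_conjugate[OF homeomorphic_map_eval_char]) auto

end

section \<open>The anqie generated by a family of bounded sequences\<close>

locale anqie_setting =
  fixes f :: "'l \<Rightarrow> nat \<Rightarrow> complex" and \<Lambda> :: "'l set"
    and z :: "nat \<Rightarrow> ('l \<Rightarrow> complex)"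
    and \<kappa> :: "nat \<Rightarrow> (nat \<Rightarrow> ('l \<Rightarrow> complex))"
    and X0 :: "('l \<Rightarrow> complex) set" and Y :: "(nat \<Rightarrow> ('l \<Rightarrow> complex)) set"
    and B :: "(nat \<Rightarrow> ('l \<Rightarrow> complex)) \<Rightarrow> (nat \<Rightarrow> ('l \<Rightarrow> complex))"
  assumes bdd: "\<And>l. l \<in> \<Lambda> \<Longrightarrow> bounded_seq (f l)"
    and z_def: "\<And>n. z n = restrict (\<lambda>l. f l n) \<Lambda>"
    and X0_def: "X0 = closure (range z)"
    and \<kappa>_def: "\<And>n. \<kappa> n = (\<lambda>k. z (n + k))"
    and Y_def: "Y = closure (range \<kappa>)"
    and B_def: "\<And>\<omega>. B \<omega> = (\<lambda>k. \<omega> (Suc k))"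
begin

text \<open>The product of the closures of the \<open>f l ` UNIV\<close> over \<open>\<Lambda>\<close>, inside \<open>'l \<Rightarrow> complex\<close>:
  as \<open>z n\<close> is a \<open>restrict\<close>, its coordinates outside \<open>\<Lambda>\<close> are \<open>undefined\<close>.\<close>

definition coord_range :: "'l \<Rightarrow> complex set" where
  "coord_range l = (if l \<in> \<Lambda> then closure (range (f l)) else {undefined})"

lemma compact_coord_range: "compact (coord_range l)"
  using bdd[of l] by (simp add: coord_range_def bounded_seq_def)

lemma z_in_coord_ranges: "z n \<in> PiE UNIV coord_range"
  unfolding PiE_UNIV_domain Pi_iff z_def coord_range_def by (auto simp: closure_def)

lemma coord_ranges_separate:
  assumes "x \<in> PiE UNIV coord_range" "y \<in> PiE UNIV coord_range" "x \<noteq> y"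
  shows "\<exists>l\<in>\<Lambda>. x l \<noteq> y l"
proof -
  obtain l where "x l \<noteq> y l"
    using assms(3) by (auto simp: fun_eq_iff)
  moreover have "l \<in> \<Lambda>"
  proof (rule ccontr)
    assume "l \<notin> \<Lambda>"
    then have "x l = undefined" "y l = undefined"
      using assms(1,2) unfolding PiE_UNIV_domain Pi_iff coord_range_def by (metis UNIV_I singletonD)+
    with \<open>x l \<noteq> y l\<close> show False
      by simp
  qed
  ultimately show ?thesis
    by blast
qed

lemma
  shows X0_subset: "X0 \<subseteq> PiE UNIV coord_range" and compact_X0: "compact X0"
  unfolding X0_def
  using closure_range_in_compact[of _ z, OF compact_PiE_UNIV[OF compact_coord_range] z_in_coord_ranges]
  by blast+

lemma
  shows Y_subset: "Y \<subseteq> PiE UNIV (\<lambda>_. PiE UNIV coord_range)" and compact_Y: "compact Y"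
proof -
  have "compact (PiE UNIV (\<lambda>_::nat. PiE UNIV coord_range))"
    by (intro compact_PiE_UNIV compact_coord_range)
  moreover have "\<kappa> n \<in> PiE UNIV (\<lambda>_. PiE UNIV coord_range)" for n
    unfolding PiE_UNIV_domain[of "\<lambda>_. PiE UNIV coord_range"] \<kappa>_def using z_in_coord_ranges by blast
  ultimately show "Y \<subseteq> PiE UNIV (\<lambda>_. PiE UNIV coord_range)" "compact Y"
    unfolding Y_def by (rule closure_range_subset, rule compact_closure_range)
qed

lemma funpow_B: "(B ^^ k) \<omega> = (\<lambda>j. \<omega> (j + k))"
  by (induction k arbitrary: \<omega>) (simp_all add: B_def funpow_Suc_right)

lemma continuous_on_B: "continuous_on S B"
proof -
  have "B = (\<lambda>\<omega> k. \<omega> (Suc k))"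
    using B_def by blast
  then show ?thesis
    by (simp add: continuous_on_coordinatewise_then_product continuous_on_coordinate)
qed

sublocale X0: sequence_closure z X0
  using X0_def compact_X0 by unfold_locales

sublocale Y: sequence_closure_shift \<kappa> Y B
  using Y_def compact_Y continuous_on_B by unfold_locales (simp_all add: B_def \<kappa>_def)

lemma cstar_gen_eq: "(\<lambda>g. g \<circ> z) ` {g. continuous_on X0 g} = cstar_gen (f ` \<Lambda>)"
proof -
  let ?Gs = "(\<lambda>l x. x l) ` \<Lambda>"
  have f_eq: "f ` \<Lambda> = (\<lambda>g. g \<circ> z) ` ?Gs"
    by (force simp: image_image comp_def z_def)
  have sep: "\<exists>g\<in>?Gs. g x \<noteq> g y" if xy: "x \<in> X0" "y \<in> X0" "x \<noteq> y" for x y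
  proof -
    obtain l where "l \<in> \<Lambda>" "x l \<noteq> y l"
      using coord_ranges_separate[of x y] X0_subset xy by blast
    then show ?thesis
      by (intro bexI[of _ "\<lambda>x. x l"]) simp_all
  qed
  have cont: "continuous_on X0 g" if "g \<in> ?Gs" for g
    using that by (auto intro: continuous_on_coordinate)
  have "cstar_gen ((\<lambda>g. g \<circ> z) ` ?Gs) = X0.pullback_alg"
    using cont sep by (rule X0.cstar_gen_eq_pullback_alg)
  then show ?thesis
    unfolding f_eq X0.pullback_alg_def by (rule sym)
qed

lemma anqie_gen_eq: "(\<lambda>h. h \<circ> \<kappa>) ` {h. continuous_on Y h} = anqie_gen (f ` \<Lambda>)"
proof -
  let ?Gs = "(\<lambda>l y. y 0 l) ` \<Lambda>"
  have f_eq: "f ` \<Lambda> = (\<lambda>g. g \<circ> \<kappa>) ` ?Gs"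
    by (force simp: image_image comp_def z_def \<kappa>_def)
  have sep: "\<exists>g\<in>?Gs. \<exists>k. g ((B ^^ k) x) \<noteq> g ((B ^^ k) y)"
    if xy: "x \<in> Y" "y \<in> Y" "x \<noteq> y" for x y
  proof -
    obtain k where "x k \<noteq> y k"
      using \<open>x \<noteq> y\<close> by (auto simp: fun_eq_iff)
    moreover have "x k \<in> PiE UNIV coord_range" "y k \<in> PiE UNIV coord_range"
      using Y_subset xy by (metis PiE_mem UNIV_I subsetD)+
    ultimately obtain l where "l \<in> \<Lambda>" "x k l \<noteq> y k l"
      using coord_ranges_separate by blast
    then show ?thesis
      by (intro bexI[of _ "\<lambda>y. y 0 l"] exI[of _ k]) (simp_all add: funpow_B)
  qed
  have cont: "continuous_on Y g" if "g \<in> ?Gs" for g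
  proof -
    obtain l where "g = (\<lambda>y. y 0 l)"
      using \<open>g \<in> ?Gs\<close> by blast
    then show ?thesis
      using continuous_on_compose2[OF continuous_on_coordinate[of UNIV l] continuous_on_coordinate subset_UNIV]
      by simp
  qed
  have "anqie_gen ((\<lambda>g. g \<circ> \<kappa>) ` ?Gs) = Y.pullback_alg"
    using cont sep by (rule Y.anqie_gen_eq_pullback_alg)
  then show ?thesis
    unfolding f_eq Y.pullback_alg_def by (rule sym)
qed

end

theorem theorem3p3:
  fixes f :: "'l \<Rightarrow> nat \<Rightarrow> complex" and \<Lambda> :: "'l set"
    and z :: "nat \<Rightarrow> ('l \<Rightarrow> complex)"
    and \<kappa> :: "nat \<Rightarrow> (nat \<Rightarrow> ('l \<Rightarrow> complex))"
    and X0 :: "('l \<Rightarrow> complex) set" and Y :: "(nat \<Rightarrow> ('l \<Rightarrow> complex)) set"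
    and B :: "(nat \<Rightarrow> ('l \<Rightarrow> complex)) \<Rightarrow> (nat \<Rightarrow> ('l \<Rightarrow> complex))"
  assumes bdd: "\<And>l. l \<in> \<Lambda> \<Longrightarrow> bounded_seq (f l)"
    and z_def: "\<And>n. z n = restrict (\<lambda>l. f l n) \<Lambda>"
    and X0_def: "X0 = closure (range z)"
    and \<kappa>_def: "\<And>n. \<kappa> n = (\<lambda>k. z (n + k))"
    and Y_def: "Y = closure (range \<kappa>)"
    and B_def: "\<And>\<omega>. B \<omega> = (\<lambda>k. \<omega> (Suc k))"
  shows
    "((\<lambda>g. g \<circ> z) ` {g. continuous_on X0 g} = cstar_gen (f ` \<Lambda>) \<and>
      (\<forall>g h :: ('l \<Rightarrow> complex) \<Rightarrow> complex. continuous_on X0 g \<and> continuous_on X0 h \<and> g \<circ> z = h \<circ> z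
              \<longrightarrow> (\<forall>x\<in>X0. g x = h x)))
   \<and> ((\<lambda>h. h \<circ> \<kappa>) ` {h. continuous_on Y h} = anqie_gen (f ` \<Lambda>) \<and>
      (\<forall>g h :: (nat \<Rightarrow> ('l \<Rightarrow> complex)) \<Rightarrow> complex. continuous_on Y g \<and> continuous_on Y h \<and> g \<circ> \<kappa> = h \<circ> \<kappa>
              \<longrightarrow> (\<forall>y\<in>Y. g y = h y)))
   \<and> (\<exists>\<Phi>. homeomorphic_map (max_ideal_space (anqie_gen (f ` \<Lambda>))) (top_of_set Y) \<Phi> \<and>
          (\<forall>n. \<Phi> (iota (anqie_gen (f ` \<Lambda>)) n) = \<kappa> n) \<and>
          (\<forall>\<rho> \<in> characters (anqie_gen (f ` \<Lambda>)).
              \<Phi> (mapA (anqie_gen (f ` \<Lambda>)) \<rho>) = B (\<Phi> \<rho>)))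
   \<and> anqie_entropy (f ` \<Lambda>) = topological_entropy (top_of_set Y) B"
proof -
  interpret anqie_setting f \<Lambda> z \<kappa> X0 Y B
    by (rule anqie_setting.intro) (fact bdd z_def X0_def \<kappa>_def Y_def B_def)+
  have alg: "Y.pullback_alg = anqie_gen (f ` \<Lambda>)"
    using anqie_gen_eq by (simp add: Y.pullback_alg_def)
  show ?thesis
    using cstar_gen_eq X0.eq_on_K_from_sequence anqie_gen_eq Y.eq_on_K_from_sequence
      Y.max_ideal_space_conjugacy Y.topological_entropy_mapA
    unfolding anqie_entropy_def alg by blast
qed

end
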